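(* Let $n\ge 3$ and let $S$ be a double-$n$ string with diameter $d<n/2$, whose symbols are labeled $1,\dots,n$ in the order of their first occurrence in $S$. For $1\le i\le d+1$, let $r_i$ be the number of symbols $j\neq i$ such that each of the two occurrences of $j$ lies at position-distance at most $d$ from some occurrence of $i$. Then $r_i \le 3d+i-n$.
   Context: A double-$n$ string is a string of length $2n$ over an alphabet of $n$ symbols in which each symbol appears exactly twice. Positions in the string are numbered $1,\dots,2n$; the position-distance between two entries is the absolute difference of their positions. The distance between two distinct symbols is the minimum position-distance between an occurrence of the first and an occurrence of the second. The diameter of a double-$n$ string is the maximum of the distance over all pairs of distinct symbols. *)

theory Defs
  imports Main
begin

text \<open>A string of length 2n is a function s on positions 1..2n; symbols are 1..n.\<close>

definition occ :: "nat \<Rightarrow> (nat \<Rightarrow> nat) \<Rightarrow> nat \<Rightarrow> nat set" where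
  "occ n s a = {p \<in> {1..2*n}. s p = a}"

definition double_string :: "nat \<Rightarrow> (nat \<Rightarrow> nat) \<Rightarrow> bool" where
  "double_string n s \<longleftrightarrow> (\<forall>p \<in> {1..2*n}. s p \<in> {1..n}) \<and> (\<forall>a \<in> {1..n}. card (occ n s a) = 2)"

definition pdist :: "nat \<Rightarrow> nat \<Rightarrow> nat" where
  "pdist p q = nat \<bar>int p - int q\<bar>"

definition symdist :: "nat \<Rightarrow> (nat \<Rightarrow> nat) \<Rightarrow> nat \<Rightarrow> nat \<Rightarrow> nat" where
  "symdist n s a b = Min {pdist p q | p q. p \<in> occ n s a \<and> q \<in> occ n s b}"

definition diameter :: "nat \<Rightarrow> (nat \<Rightarrow> nat) \<Rightarrow> nat" where
  "diameter n s = Max {symdist n s a b | a b. a \<in> {1..n} \<and> b \<in> {1..n} \<and> a \<noteq> b}"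

definition first_occ_ordered :: "nat \<Rightarrow> (nat \<Rightarrow> nat) \<Rightarrow> bool" where
  "first_occ_ordered n s \<longleftrightarrow>
     (\<forall>a \<in> {1..n}. \<forall>b \<in> {1..n}. a < b \<longrightarrow> Min (occ n s a) < Min (occ n s b))"

definition r_count :: "nat \<Rightarrow> (nat \<Rightarrow> nat) \<Rightarrow> nat \<Rightarrow> nat \<Rightarrow> nat" where
  "r_count n s d i = card {j \<in> {1..n}. j \<noteq> i \<and>
      (\<forall>q \<in> occ n s j. \<exists>p \<in> occ n s i. pdist p q \<le> d)}"

end

theory Submission
  imports Defs
begin

text \<open>
  Let \<open>p\<^sub>1 < p\<^sub>2\<close> be the occurrences of \<open>i\<close>. No symbol can occur twice before \<open>p\<^sub>1\<close>:
  otherwise all \<open>n - i \<ge> d\<close> symbols larger than \<open>i\<close>, which first occur after \<open>p\<^sub>1\<close>,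
  would have to fit into the \<open>d - 1\<close> positions strictly between \<open>p\<^sub>1\<close> and \<open>p\<^sub>1 + d\<close>.
  As all symbols before \<open>p\<^sub>1\<close> are smaller than \<open>i\<close>, this gives \<open>p\<^sub>1 \<le> i\<close>.
  Now count the positions within distance \<open>d\<close> of an occurrence of \<open>i\<close>: there are at most
  \<open>(i - 1) + (d + 1) + (2d + 1)\<close> of them, while every symbol contributes at least one such
  position and \<open>i\<close> as well as each of the \<open>r\<^sub>i\<close> counted symbols contributes two.
\<close>

lemma occ_subset: "occ n s a \<subseteq> {1..2*n}"
  unfolding occ_def by auto

lemma finite_occ [simp]: "finite (occ n s a)"
  by (rule finite_subset[OF occ_subset]) simp

lemma mem_occ_self: "p \<in> {1..2*n} \<Longrightarrow> p \<in> occ n s (s p)"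
  unfolding occ_def by auto

lemma double_string_symbol:
  "double_string n s \<Longrightarrow> p \<in> {1..2*n} \<Longrightarrow> s p \<in> {1..n}"
  unfolding double_string_def by auto

lemma double_string_card_occ:
  "double_string n s \<Longrightarrow> a \<in> {1..n} \<Longrightarrow> card (occ n s a) = 2"
  unfolding double_string_def by auto

lemma double_string_occ_pair:
  assumes "double_string n s" "a \<in> {1..n}"
  obtains p q where "p < q" "occ n s a = {p, q}"
proof -
  obtain x y where xy: "occ n s a = {x, y}" "x \<noteq> y"
    using double_string_card_occ[OF assms] by (auto simp: card_2_iff)
  show ?thesis
    using that[of x y] that[of y x] xy by (cases "x < y") (auto simp: insert_commute)
qed

lemma double_string_occ_nonempty:
  "double_string n s \<Longrightarrow> a \<in> {1..n} \<Longrightarrow> occ n s a \<noteq> {}"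
  by (metis double_string_card_occ card.empty zero_neq_numeral)

lemma pdist_le_iff: "pdist p q \<le> d \<longleftrightarrow> p \<le> q + d \<and> q \<le> p + d"
  unfolding pdist_def by auto

lemma symdist_le_diameter:
  assumes "a \<in> {1..n}" "b \<in> {1..n}" "a \<noteq> b"
  shows "symdist n s a b \<le> diameter n s"
proof -
  have "{symdist n s a b | a b. a \<in> {1..n} \<and> b \<in> {1..n} \<and> a \<noteq> b}
          \<subseteq> (\<lambda>(a, b). symdist n s a b) ` ({1..n} \<times> {1..n})"
    by auto
  then have "finite {symdist n s a b | a b. a \<in> {1..n} \<and> b \<in> {1..n} \<and> a \<noteq> b}"
    by (rule finite_subset) simp
  then show ?thesis
    unfolding diameter_def using assms by (intro Max_ge) auto
qed

lemma symdist_attained: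
  assumes "double_string n s" "a \<in> {1..n}" "b \<in> {1..n}"
  obtains p q where "p \<in> occ n s a" "q \<in> occ n s b" "pdist p q = symdist n s a b"
proof -
  let ?P = "{pdist p q | p q. p \<in> occ n s a \<and> q \<in> occ n s b}"
  have "?P \<subseteq> (\<lambda>(p, q). pdist p q) ` (occ n s a \<times> occ n s b)"
    by auto
  then have "finite ?P"
    by (rule finite_subset) simp
  moreover have "?P \<noteq> {}"
    using double_string_occ_nonempty[OF assms(1,2)] double_string_occ_nonempty[OF assms(1,3)]
    by blast
  ultimately have "symdist n s a b \<in> ?P"
    unfolding symdist_def by (rule Min_in)
  then obtain p q where "p \<in> occ n s a" "q \<in> occ n s b" "pdist p q = symdist n s a b"
    by force
  then show ?thesis
    by (rule that)
qed

lemma double_string_close_occurrences: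
  assumes "double_string n s" "a \<in> {1..n}" "b \<in> {1..n}" "a \<noteq> b" "diameter n s \<le> d"
  obtains p q where "p \<in> occ n s a" "q \<in> occ n s b" "pdist p q \<le> d"
proof -
  obtain p q where pq: "p \<in> occ n s a" "q \<in> occ n s b" "pdist p q = symdist n s a b"
    using symdist_attained[OF assms(1-3)] .
  have "pdist p q \<le> d"
    using pq(3) symdist_le_diameter[OF assms(2-4), of s] assms(5) by simp
  with pq(1,2) show ?thesis
    by (rule that)
qed

lemma first_occ_ordered_less:
  assumes "first_occ_ordered n s" "a \<in> {1..n}" "b \<in> {1..n}" "a < b" "q \<in> occ n s b"
  shows "Min (occ n s a) < q"
proof -
  have "Min (occ n s a) < Min (occ n s b)"
    using assms(1-4) unfolding first_occ_ordered_def by blast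
  also have "Min (occ n s b) \<le> q"
    using assms(5) by simp
  finally show ?thesis .
qed

lemma symbol_before_first_occ_less:
  assumes "double_string n s" "first_occ_ordered n s" "a \<in> {1..n}"
    and "p \<in> {1..2*n}" "p < Min (occ n s a)"
  shows "s p < a"
proof (rule ccontr)
  assume "\<not> s p < a"
  moreover have "s p \<noteq> a"
    using assms(5) Min_le[OF finite_occ mem_occ_self[OF assms(4), of s]] by auto
  ultimately have "a < s p"
    by simp
  then show False
    using first_occ_ordered_less[OF assms(2,3) double_string_symbol[OF assms(1,4)] _
          mem_occ_self[OF assms(4)]] assms(5) by simp
qed

text \<open>A symbol after \<open>a\<close> must come within distance \<open>d\<close> of \<open>j\<close>, whose occurrences both precede
  the first occurrence of \<open>a\<close>.\<close>

lemma later_symbols_in_window: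
  assumes "double_string n s" "first_occ_ordered n s" "diameter n s \<le> d"
    and "a \<in> {1..n}" "j \<in> {1..n}" "j < a"
    and "\<forall>q\<in>occ n s j. q < Min (occ n s a)"
  shows "{a+1..n} \<subseteq> s ` {Min (occ n s a)<..<Min (occ n s a) + d}"
proof
  fix k
  assume k: "k \<in> {a+1..n}"
  then have "k \<in> {1..n}" "j \<noteq> k"
    using assms(6) by auto
  then obtain x y where xy: "x \<in> occ n s j" "y \<in> occ n s k" "pdist x y \<le> d"
    using double_string_close_occurrences[OF assms(1,5)] assms(3) by metis
  have "Min (occ n s a) < y"
    using first_occ_ordered_less[OF assms(2,4) \<open>k \<in> {1..n}\<close> _ xy(2)] k by simp
  moreover have "y < Min (occ n s a) + d"
    using xy(3) assms(7) xy(1) calculation unfolding pdist_le_iff by fastforce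
  moreover have "s y = k"
    using xy(2) unfolding occ_def by simp
  ultimately show "k \<in> s ` {Min (occ n s a)<..<Min (occ n s a) + d}"
    by (intro rev_image_eqI[of y]) auto
qed

lemma inj_on_before_first_occ:
  assumes "double_string n s" "first_occ_ordered n s" "diameter n s \<le> d"
    and "a \<in> {1..n}" "a < n" "d + a \<le> n"
  shows "inj_on s {1..<Min (occ n s a)}"
proof (rule inj_onI, rule ccontr)
  let ?m = "Min (occ n s a)"
  have m: "?m \<in> {1..2*n}"
    using Min_in[OF finite_occ double_string_occ_nonempty[OF assms(1,4)]] occ_subset by blast
  fix p q
  assume pq: "p \<in> {1..<?m}" "q \<in> {1..<?m}" "s p = s q" "p \<noteq> q"
  let ?j = "s p"
  have pq_range: "p \<in> {1..2*n}" "q \<in> {1..2*n}"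
    using pq m by auto
  have j: "?j \<in> {1..n}" "?j < a"
    using pq pq_range double_string_symbol[OF assms(1)]
          symbol_before_first_occ_less[OF assms(1,2,4)] by auto
  have "p \<in> occ n s ?j" "q \<in> occ n s ?j"
    using mem_occ_self[where s = s, OF pq_range(1)] mem_occ_self[where s = s, OF pq_range(2)] pq(3)
    by simp_all
  then have "{p, q} = occ n s ?j"
    using double_string_card_occ[OF assms(1) j(1)] pq(4) by (intro card_subset_eq) auto
  then have "\<forall>x\<in>occ n s ?j. x < ?m"
    using pq by auto
  then have "card {a+1..n} \<le> card (s ` {?m<..<?m + d})"
    using later_symbols_in_window[OF assms(1-4) j] by (intro card_mono) auto
  also have "\<dots> \<le> card {?m<..<?m + d}"
    by (rule card_image_le) simp
  finally show False
    using assms(5,6) by simp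
qed

lemma first_occ_le:
  assumes "double_string n s" "first_occ_ordered n s" "diameter n s \<le> d"
    and "a \<in> {1..n}" "a < n" "d + a \<le> n"
  shows "Min (occ n s a) \<le> a"
proof -
  let ?m = "Min (occ n s a)"
  have m: "?m \<in> {1..2*n}"
    using Min_in[OF finite_occ double_string_occ_nonempty[OF assms(1,4)]] occ_subset by blast
  have "s ` {1..<?m} \<subseteq> {1..<a}"
    using m double_string_symbol[OF assms(1)] symbol_before_first_occ_less[OF assms(1,2,4)]
    by fastforce
  then have "card (s ` {1..<?m}) \<le> card {1..<a}"
    by (intro card_mono) auto
  then have "?m - 1 \<le> a - 1"
    using card_image[OF inj_on_before_first_occ[OF assms]] by simp
  then show ?thesis
    using m assms(4) by auto
qed

definition nbhd :: "nat \<Rightarrow> (nat \<Rightarrow> nat) \<Rightarrow> nat \<Rightarrow> nat \<Rightarrow> nat set" where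
  "nbhd n s d a = {q \<in> {1..2*n}. \<exists>p\<in>occ n s a. pdist p q \<le> d}"

lemma nbhd_subset: "nbhd n s d a \<subseteq> {1..2*n}"
  unfolding nbhd_def by auto

lemma card_nbhd_le:
  assumes "occ n s a = {p\<^sub>1, p\<^sub>2}" "p\<^sub>1 < p\<^sub>2"
  shows "card (nbhd n s d a) \<le> (p\<^sub>1 - 1) + (d + 1) + (2*d + 1)"
proof -
  have "nbhd n s d a \<subseteq> {1..<p\<^sub>1} \<union> {p\<^sub>1..p\<^sub>1+d} \<union> {p\<^sub>2-d..p\<^sub>2+d}"
    using assms unfolding nbhd_def pdist_le_iff by auto
  then have "card (nbhd n s d a) \<le> card ({1..<p\<^sub>1} \<union> {p\<^sub>1..p\<^sub>1+d} \<union> {p\<^sub>2-d..p\<^sub>2+d})"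
    by (intro card_mono) auto
  also have "\<dots> \<le> card {1..<p\<^sub>1} + card {p\<^sub>1..p\<^sub>1+d} + card {p\<^sub>2-d..p\<^sub>2+d}"
    by (meson add_mono card_Un_le le_trans order_refl)
  finally show ?thesis
    by simp
qed

lemma double_string_card_eq_sum:
  assumes "double_string n s" "A \<subseteq> {1..2*n}"
  shows "card A = (\<Sum>a\<in>{1..n}. card (A \<inter> occ n s a))"
proof -
  have "A = (\<Union>a\<in>{1..n}. A \<inter> occ n s a)"
  proof (intro equalityI subsetI)
    fix q
    assume "q \<in> A"
    then have "q \<in> A \<inter> occ n s (s q)" "s q \<in> {1..n}"
      using assms double_string_symbol mem_occ_self[of q n s] by auto
    then show "q \<in> (\<Union>a\<in>{1..n}. A \<inter> occ n s a)"
      by blast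
  qed auto
  also have "card \<dots> = (\<Sum>a\<in>{1..n}. card (A \<inter> occ n s a))"
    by (rule card_UN_disjoint) (auto simp: occ_def)
  finally show ?thesis .
qed

lemma card_nbhd_ge:
  assumes "double_string n s" "diameter n s \<le> d" "a \<in> {1..n}"
  shows "n + r_count n s d a + 1 \<le> card (nbhd n s d a)"
proof -
  define R where "R = {j \<in> {1..n}. j \<noteq> a \<and> (\<forall>q\<in>occ n s j. \<exists>p\<in>occ n s a. pdist p q \<le> d)}"
  let ?N = "nbhd n s d a"
  let ?c = "\<lambda>b. card (?N \<inter> occ n s b)"
  have R: "insert a R \<subseteq> {1..n}" "a \<notin> R" "finite R"
    using assms(3) unfolding R_def by auto
  have covered: "?c b = 2" if "b \<in> insert a R" for b
  proof -
    have "occ n s b \<subseteq> ?N"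
    proof (cases "b = a")
      case True
      have "pdist x x \<le> d" for x
        unfolding pdist_def by simp
      then show ?thesis
        using True occ_subset[of n s a] unfolding nbhd_def by blast
    next
      case False
      then show ?thesis
        using that occ_subset[of n s b] unfolding nbhd_def R_def by auto
    qed
    moreover have "b \<in> {1..n}"
      using that R(1) by blast
    ultimately show ?thesis
      using double_string_card_occ[OF assms(1)] by (simp add: Int_absorb1)
  qed
  have hit: "1 \<le> ?c b" if b: "b \<in> {1..n}" for b
  proof (cases "b = a")
    case True
    then show ?thesis
      using covered by simp
  next
    case False
    then obtain p q where "p \<in> occ n s a" "q \<in> occ n s b" "pdist p q \<le> d"
      using double_string_close_occurrences[OF assms(1,3) b _ assms(2)] False by blast
    then have "q \<in> ?N \<inter> occ n s b"
      using occ_subset unfolding nbhd_def by blast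
    then show ?thesis
      by (simp add: Suc_le_eq card_gt_0_iff) blast
  qed
  have "(\<Sum>b\<in>insert a R. ?c b) = 2 * card (insert a R)"
    using covered by simp
  moreover have "card ({1..n} - insert a R) = n - card (insert a R)"
    using card_Diff_subset[OF _ R(1)] R(3) by simp
  ultimately have "2 * card (insert a R) + (n - card (insert a R))
          = (\<Sum>b\<in>insert a R. ?c b) + card ({1..n} - insert a R)"
    by simp
  also have "\<dots> \<le> (\<Sum>b\<in>insert a R. ?c b) + (\<Sum>b\<in>{1..n} - insert a R. ?c b)"
    using hit sum_mono[of "{1..n} - insert a R" "\<lambda>_. 1" ?c] by simp
  also have "\<dots> = (\<Sum>b\<in>{1..n}. ?c b)"
    using sum.subset_diff[OF R(1) finite_atLeastAtMost, of ?c] by (simp add: add.commute)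
  also have "\<dots> = card ?N"
    using double_string_card_eq_sum[OF assms(1) nbhd_subset] by simp
  finally have "n + card (insert a R) \<le> card ?N"
    using card_mono[OF finite_atLeastAtMost R(1)] by simp
  then show ?thesis
    using R(2,3) unfolding r_count_def R_def[symmetric] by simp
qed

theorem lemma3p4:
  fixes n d i :: nat and s :: "nat \<Rightarrow> nat"
  assumes "n \<ge> 3"
    and "double_string n s"
    and "first_occ_ordered n s"
    and "d = diameter n s"
    and "2 * d < n"
    and "1 \<le> i" and "i \<le> d + 1"
  shows "int (r_count n s d i) \<le> 3 * int d + int i - int n"
proof -
  have i: "i \<in> {1..n}" "i < n" "d + i \<le> n"
    using assms by auto
  obtain p\<^sub>1 p\<^sub>2 where p: "p\<^sub>1 < p\<^sub>2" "occ n s i = {p\<^sub>1, p\<^sub>2}"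
    using double_string_occ_pair[OF assms(2) i(1)] .
  have "p\<^sub>1 \<le> i"
    using first_occ_le[OF assms(2,3) _ i] assms(4) p by simp
  moreover have "p\<^sub>1 \<ge> 1"
    using p(2) occ_subset[of n s i] by auto
  moreover have "n + r_count n s d i + 1 \<le> (p\<^sub>1 - 1) + (d + 1) + (2*d + 1)"
    using card_nbhd_ge[OF assms(2) _ i(1), of d] card_nbhd_le[OF p(2,1), of d] assms(4)
    by simp
  ultimately show ?thesis
    by linarith
qed

end
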